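(* Let $P$ be a $\mathcal{DL}_S$ program. Every Herbrand model $I$ of $P$ is a fixed point of the immediate consequence operator, i.e. $\mathit{IC}_P(I)=I$.
   Context: Fix a set $\mathit{Lit}$ of literals, a set of variables, and relation symbols, each with a fixed arity. Values: $\mathit{Val} ::= R(v_1,\ldots,v_n) \mid \ell$ with $R$ of arity $n$, $v_i\in\mathit{Val}$, $\ell\in\mathit{Lit}$. Facts are values of the form $R(v_1,\ldots,v_n)$ (possibly nested). Terms: $t ::= R(t_1,\ldots,t_n)\mid x \mid \ell$, $x$ a variable. A $\mathcal{DL}_S$ rule $R$ has a head clause $\mathit{Head}(R)=Q(t_1,\ldots,t_n)$ and a finite set $\mathit{Body}(R)$ of body clauses of the form $\mathit{id}=Q(t_1,\ldots,t_n)$ ($\mathit{id}$ a variable naming the matched fact); every head variable occurs in the body. A program $P$ is a finite set of rules. A substitution $\sigma$ maps variables to values; for a set of facts $I$, $\mathit{Body}(R)\sigma\subseteq I$ means that for each body clause $\mathit{id}=Q(\vec t)$, $Q(\vec t)\sigma\in I$ and $\sigma(\mathit{id})=Q(\vec t)\sigma$. $\mathit{subfact}(R(v_1,\ldots,v_n))=\{R(v_1,\ldots,v_n)\}\cup\bigcup_i\mathit{subfact}(v_i)$, $\mathit{subfact}(\ell)=\emptyset$ for literals; a set of facts $I$ is subfact-closed if $I=\bigcup\{\mathit{subfact}(f)\mid f\in I\}$. A database is a set of facts. $\mathit{IC}_R(\mathit{db})=\mathit{db}\cup\bigcup\{\mathit{subfact}(\mathit{Head}(R)\sigma)\mid \mathit{Body}(R)\sigma\subseteq\mathit{db}\}$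 and $\mathit{IC}_P(\mathit{db})=\mathit{db}\cup\bigcup_{R\in P}\mathit{IC}_R(\mathit{db})$. The Herbrand universe of $P$ is the set of all facts constructible from the relation symbols appearing in $P$ (and literals). A Herbrand interpretation is a subfact-closed subset $I$ of the Herbrand universe. $I\models R$ iff for every substitution $\sigma$, $\mathit{Body}(R)\sigma\subseteq I$ implies $\mathit{Head}(R)\sigma\in I$. A Herbrand model of $P$ is a Herbrand interpretation in which every rule of $P$ is true. *)

theory Defs
  imports Main
begin

datatype ('r,'l) val = Fact 'r "('r,'l) val list" | Lit 'l

datatype ('r,'l,'v) trm = TFact 'r "('r,'l,'v) trm list" | TVar 'v | TLit 'l

text \<open>A clause Q(t1,...,tn) is a relation symbol with argument terms.
  A rule has a head clause and a set of body clauses id = Q(t1,...,tn).\<close>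
type_synonym ('r,'l,'v) clause = "'r \<times> ('r,'l,'v) trm list"

datatype ('r,'l,'v) rule =
  Rule (Head: "('r,'l,'v) clause") (Body: "('v \<times> ('r,'l,'v) clause) set")

type_synonym ('r,'l,'v) program = "('r,'l,'v) rule set"

fun subst :: "('v \<Rightarrow> ('r,'l) val) \<Rightarrow> ('r,'l,'v) trm \<Rightarrow> ('r,'l) val" where
  "subst \<sigma> (TFact R ts) = Fact R (map (subst \<sigma>) ts)"
| "subst \<sigma> (TVar x) = \<sigma> x"
| "subst \<sigma> (TLit l) = Lit l"

definition subst_clause :: "('v \<Rightarrow> ('r,'l) val) \<Rightarrow> ('r,'l,'v) clause \<Rightarrow> ('r,'l) val" where
  "subst_clause \<sigma> c = Fact (fst c) (map (subst \<sigma>) (snd c))"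

definition body_sat :: "('r,'l,'v) rule \<Rightarrow> ('v \<Rightarrow> ('r,'l) val) \<Rightarrow> ('r,'l) val set \<Rightarrow> bool" where
  "body_sat R \<sigma> I \<longleftrightarrow>
     (\<forall>(i, c) \<in> Body R. subst_clause \<sigma> c \<in> I \<and> \<sigma> i = subst_clause \<sigma> c)"

fun subfact :: "('r,'l) val \<Rightarrow> ('r,'l) val set" where
  "subfact (Fact R vs) = insert (Fact R vs) (\<Union>v\<in>set vs. subfact v)"
| "subfact (Lit l) = {}"

definition subfact_closed :: "('r,'l) val set \<Rightarrow> bool" where
  "subfact_closed I \<longleftrightarrow> I = (\<Union>f\<in>I. subfact f)"

definition IC_rule :: "('r,'l,'v) rule \<Rightarrow> ('r,'l) val set \<Rightarrow> ('r,'l) val set" where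
  "IC_rule R db = db \<union> (\<Union>{subfact (subst_clause \<sigma> (Head R)) | \<sigma>. body_sat R \<sigma> db})"

definition IC :: "('r,'l,'v) program \<Rightarrow> ('r,'l) val set \<Rightarrow> ('r,'l) val set" where
  "IC P db = db \<union> (\<Union>R\<in>P. IC_rule R db)"

fun trm_vars :: "('r,'l,'v) trm \<Rightarrow> 'v set" where
  "trm_vars (TFact R ts) = (\<Union>t\<in>set ts. trm_vars t)"
| "trm_vars (TVar x) = {x}"
| "trm_vars (TLit l) = {}"

fun trm_rels :: "('r,'l,'v) trm \<Rightarrow> 'r set" where
  "trm_rels (TFact R ts) = insert R (\<Union>t\<in>set ts. trm_rels t)"
| "trm_rels (TVar x) = {}"
| "trm_rels (TLit l) = {}"

definition clause_vars :: "('r,'l,'v) clause \<Rightarrow> 'v set" where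
  "clause_vars c = (\<Union>t\<in>set (snd c). trm_vars t)"

definition clause_rels :: "('r,'l,'v) clause \<Rightarrow> 'r set" where
  "clause_rels c = insert (fst c) (\<Union>t\<in>set (snd c). trm_rels t)"

definition rule_rels :: "('r,'l,'v) rule \<Rightarrow> 'r set" where
  "rule_rels R = clause_rels (Head R) \<union> (\<Union>(i, c)\<in>Body R. clause_rels c)"

definition program_rels :: "('r,'l,'v) program \<Rightarrow> 'r set" where
  "program_rels P = (\<Union>R\<in>P. rule_rels R)"

fun trm_wf :: "('r \<Rightarrow> nat) \<Rightarrow> ('r,'l,'v) trm \<Rightarrow> bool" where
  "trm_wf ar (TFact R ts) = (length ts = ar R \<and> list_all (trm_wf ar) ts)"
| "trm_wf ar (TVar x) = True"
| "trm_wf ar (TLit l) = True"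

definition clause_wf :: "('r \<Rightarrow> nat) \<Rightarrow> ('r,'l,'v) clause \<Rightarrow> bool" where
  "clause_wf ar c \<longleftrightarrow> length (snd c) = ar (fst c) \<and> list_all (trm_wf ar) (snd c)"

definition wf_rule :: "('r \<Rightarrow> nat) \<Rightarrow> ('r,'l,'v) rule \<Rightarrow> bool" where
  "wf_rule ar R \<longleftrightarrow> finite (Body R) \<and> clause_wf ar (Head R)
     \<and> (\<forall>(i, c)\<in>Body R. clause_wf ar c)
     \<and> clause_vars (Head R) \<subseteq> (\<Union>(i, c)\<in>Body R. insert i (clause_vars c))"

definition wf_program :: "('r \<Rightarrow> nat) \<Rightarrow> ('r,'l,'v) program \<Rightarrow> bool" where
  "wf_program ar P \<longleftrightarrow> finite P \<and> (\<forall>R\<in>P. wf_rule ar R)"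

fun val_over :: "('r \<Rightarrow> nat) \<Rightarrow> 'r set \<Rightarrow> ('r,'l) val \<Rightarrow> bool" where
  "val_over ar S (Fact R vs) = (R \<in> S \<and> length vs = ar R \<and> list_all (val_over ar S) vs)"
| "val_over ar S (Lit l) = True"

definition is_fact :: "('r,'l) val \<Rightarrow> bool" where
  "is_fact v \<longleftrightarrow> (\<exists>R vs. v = Fact R vs)"

definition herbrand_universe :: "('r \<Rightarrow> nat) \<Rightarrow> ('r,'l,'v) program \<Rightarrow> ('r,'l) val set" where
  "herbrand_universe ar P = {f. is_fact f \<and> val_over ar (program_rels P) f}"

definition herbrand_interp :: "('r \<Rightarrow> nat) \<Rightarrow> ('r,'l,'v) program \<Rightarrow> ('r,'l) val set \<Rightarrow> bool" where
  "herbrand_interp ar P I \<longleftrightarrow> I \<subseteq> herbrand_universe ar P \<and> subfact_closed I"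

definition rule_true :: "('r,'l) val set \<Rightarrow> ('r,'l,'v) rule \<Rightarrow> bool" where
  "rule_true I R \<longleftrightarrow> (\<forall>\<sigma>. body_sat R \<sigma> I \<longrightarrow> subst_clause \<sigma> (Head R) \<in> I)"

definition herbrand_model :: "('r \<Rightarrow> nat) \<Rightarrow> ('r,'l,'v) program \<Rightarrow> ('r,'l) val set \<Rightarrow> bool" where
  "herbrand_model ar P I \<longleftrightarrow> herbrand_interp ar P I \<and> (\<forall>R\<in>P. rule_true I R)"

end

theory Submission
  imports Defs
begin

lemma subfact_closed_subfact_subset:
  assumes "subfact_closed I" and "f \<in> I"
  shows "subfact f \<subseteq> I"
  using assms unfolding subfact_closed_def by blast

lemma IC_rule_fixpoint:
  assumes "subfact_closed I" and "rule_true I R"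
  shows "IC_rule R I = I"
proof -
  have "subfact (subst_clause \<sigma> (Head R)) \<subseteq> I" if "body_sat R \<sigma> I" for \<sigma>
    using assms that by (simp add: rule_true_def subfact_closed_subfact_subset)
  then show ?thesis unfolding IC_rule_def by blast
qed

lemma IC_fixpoint:
  assumes "subfact_closed I" and "\<forall>R\<in>P. rule_true I R"
  shows "IC P I = I"
  using assms by (auto simp: IC_def IC_rule_fixpoint)

theorem mainTheorem3:
  fixes ar :: "'r \<Rightarrow> nat" and P :: "('r,'l,'v) program" and I :: "('r,'l) val set"
  assumes "wf_program ar P"
    and "herbrand_model ar P I"
  shows "IC P I = I"
  using assms(2) IC_fixpoint
  unfolding herbrand_model_def herbrand_interp_def by blast

end
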